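(* Let $(M,d)$ be a compact metric space, $\mu$ a probability measure on $M$, $k:M\times M\to[0,1]$ measurable, $M^s\subseteq M$ measurable, and $\rho>0$. For a probability measure $\nu$ on $M$ and measurable $v:M\setminus M^s\to[0,1]$ define, for $x\in M\setminus M^s$, $$(T_\nu v)(x)=\frac{\int_{M^s}k(x,y)\,d\nu(y)+\int_{M\setminus M^s}k(x,y)v(y)\,d\nu(y)}{\rho+\int_M k(x,y)\,d\nu(y)}.$$ Let $v^*:M\setminus M^s\to[0,1]$ be the unique measurable map with $T_\mu v^*=v^*$. For $S=\{x_1,\dots,x_n\}$ let $\mu_S(P)=\frac1n\sum_{i=1}^n\mathbf 1(x_i\in P)$ be the empirical measure, and for $u:M\setminus M^s\to\mathbb{R}$ let $\|u\|_S=\max_{x_i\in S\setminus M^s}|u(x_i)|$. Then for every $\epsilon>0$ and every $n>\frac{6}{\epsilon\rho}$, $$\Pr_{S\sim\mu^n}\big[\|v^*-T_{\mu_S}v^*\|_S>\epsilon\big]<4n\exp\Big(-\frac{(n-1)\rho^2\epsilon^2}{36}\Big),$$ where $S\sim\mu^n$ means $x_1,\dots,x_n$ are i.i.d. with law $\mu$. *)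

theory Defs
  imports "HOL-Probability.Probability"
begin

text \<open>The operator T_nu applied to v at the point x (meaningful for x outside Ms).
  Here Ms is the absorbing set M^s and M - M^s is rendered as space nu - Ms.\<close>
definition T_op :: "'a measure \<Rightarrow> ('a \<Rightarrow> 'a \<Rightarrow> real) \<Rightarrow> 'a set \<Rightarrow> real
                     \<Rightarrow> ('a \<Rightarrow> real) \<Rightarrow> 'a \<Rightarrow> real" where
  "T_op nu k Ms rho v x =
     ((LINT y:Ms|nu. k x y) + (LINT y:(space nu - Ms)|nu. k x y * v y))
     / (rho + (LINT y|nu. k x y))"

text \<open>Empirical measure of the sample x_0, ..., x_(n-1):
  mu_S(P) = (1/n) * card {i < n. x_i in P}.\<close>
definition emp_measure :: "nat \<Rightarrow> (nat \<Rightarrow> 'a) \<Rightarrow> 'a measure" where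
  "emp_measure n X = measure_pmf (map_pmf X (pmf_of_set {..<n}))"

definition sample_norm :: "nat \<Rightarrow> (nat \<Rightarrow> 'a) \<Rightarrow> 'a set \<Rightarrow> ('a \<Rightarrow> real) \<Rightarrow> real" where
  "sample_norm n X Ms u = Max (insert 0 {\<bar>u (X i)\<bar> | i. i < n \<and> X i \<notin> Ms})"

end

theory Submission
  imports Defs
begin

(*
  Let w be v* extended by 1 on M^s. Since v* is a fixed point of T_mu, for x outside M^s we have
  v*(x) = A(x) / (rho + B(x)) with A(x) = int k(x,y) w(y) dmu(y) and B(x) = int k(x,y) dmu(y),
  while T_{mu_S} v* at x_i is the same ratio with both integrals replaced by sample averages.
  Given x_i, the other n - 1 sample points are i.i.d. with law mu, so by Hoeffding's inequality
  each leave-one-out average lies within t of its mean outside an event of probability at most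
  2 exp(-2 (n - 1) t^2). Adding back the i-th term moves an average by at most 1/n, and
  a / (rho + b) with 0 <= a <= b is (1/rho)-Lipschitz in each of a and b. With t = epsilon rho / 3
  the hypothesis n > 6 / (epsilon rho) makes the total error at most epsilon, and a union bound over
  the n sample points and the two averages gives the factor 4 n.
*)

lemma indep_vars_PiM_components:
  assumes M: "\<And>i. i \<in> I \<Longrightarrow> prob_space (M i)" and "I \<noteq> {}"
  shows "prob_space.indep_vars (PiM I M) M (\<lambda>i x. x i) I"
proof -
  interpret P: prob_space "PiM I M" by (rule prob_space_PiM) (use M in auto)
  have "distr (PiM I M) (PiM I M) (\<lambda>x. restrict x I) = distr (PiM I M) (PiM I M) (\<lambda>x. x)"
    by (intro distr_cong) (auto simp: space_PiM)
  also have "\<dots> = PiM I M" by simp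
  also have "\<dots> = (\<Pi>\<^sub>M i\<in>I. distr (PiM I M) (M i) (\<lambda>x. x i))"
    using distr_PiM_component[of I M] M by (intro PiM_cong) simp_all
  finally show ?thesis
    using \<open>I \<noteq> {}\<close> by (subst P.indep_vars_iff_distr_eq_PiM') auto
qed

lemma measure_PiM_le_sections:
  fixes mu :: "'a measure" and S :: "('i \<Rightarrow> 'a) set"
  assumes mu: "prob_space mu" and I: "finite I" "i \<in> I" and S: "S \<in> sets (PiM I (\<lambda>_. mu))"
    and sections: "\<And>y. y \<in> space mu \<Longrightarrow>
      measure (PiM (I - {i}) (\<lambda>_. mu)) {x \<in> space (PiM (I - {i}) (\<lambda>_. mu)). x(i := y) \<in> S} \<le> c"
  shows "measure (PiM I (\<lambda>_. mu)) S \<le> c"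
proof -
  interpret mu: prob_space mu by (rule mu)
  interpret product_sigma_finite "\<lambda>_. mu"
    by (simp add: product_sigma_finite_def mu.sigma_finite_measure_axioms)
  interpret P: prob_space "PiM I (\<lambda>_. mu)" by (rule prob_space_PiM) (use mu in auto)
  interpret P': prob_space "PiM (I - {i}) (\<lambda>_. mu)" by (rule prob_space_PiM) (use mu in auto)
  have I_eq: "insert i (I - {i}) = I" using I by auto
  obtain y0 where "y0 \<in> space mu" using mu.not_empty by blast
  have "c \<ge> 0" using order_trans[OF measure_nonneg sections[OF \<open>y0 \<in> space mu\<close>]] .
  have section_sets:
    "{x \<in> space (PiM (I - {i}) (\<lambda>_. mu)). x(i := y) \<in> S} \<in> sets (PiM (I - {i}) (\<lambda>_. mu))"
    if "y \<in> space mu" for y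
  proof -
    have "(\<lambda>x. x(i := y)) \<in> measurable (PiM (I - {i}) (\<lambda>_. mu)) (PiM I (\<lambda>_. mu))"
      using that I by (intro measurable_fun_upd[where J = "I - {i}"]) auto
    from measurable_sets[OF this S] show ?thesis by (simp add: vimage_def Int_def conj_commute)
  qed
  have "emeasure (PiM I (\<lambda>_. mu)) S = (\<integral>\<^sup>+ x. indicator S x \<partial>PiM (insert i (I - {i})) (\<lambda>_. mu))"
    using S by (subst I_eq) simp
  also have "\<dots> = (\<integral>\<^sup>+ y. (\<integral>\<^sup>+ x. indicator S (x(i := y)) \<partial>PiM (I - {i}) (\<lambda>_. mu)) \<partial>mu)"
    using I S by (intro product_nn_integral_insert_rev) (auto simp: insert_absorb)
  also have "\<dots> \<le> (\<integral>\<^sup>+ y. ennreal c \<partial>mu)"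
  proof (intro nn_integral_mono)
    fix y assume y: "y \<in> space mu"
    have "(\<integral>\<^sup>+ x. indicator S (x(i := y)) \<partial>PiM (I - {i}) (\<lambda>_. mu))
        = emeasure (PiM (I - {i}) (\<lambda>_. mu)) {x \<in> space (PiM (I - {i}) (\<lambda>_. mu)). x(i := y) \<in> S}"
      unfolding nn_integral_indicator[OF section_sets[OF y], symmetric]
      by (intro nn_integral_cong) (simp add: indicator_def)
    also have "\<dots> \<le> ennreal c"
      using sections[OF y] by (simp add: P'.emeasure_eq_measure ennreal_leI)
    finally show "(\<integral>\<^sup>+ x. indicator S (x(i := y)) \<partial>PiM (I - {i}) (\<lambda>_. mu)) \<le> ennreal c" .
  qed
  also have "\<dots> = ennreal c" by (simp add: mu.emeasure_space_1)
  finally show ?thesis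
    using \<open>c \<ge> 0\<close> by (simp add: P.emeasure_eq_measure)
qed

lemma Hoeffding_PiM_iid:
  fixes mu :: "'a measure" and h :: "'a \<Rightarrow> real" and t :: real
  assumes mu: "prob_space mu" and I: "finite I" "I \<noteq> {}"
    and h: "h \<in> borel_measurable mu" and h_range: "\<And>z. 0 \<le> h z \<and> h z \<le> 1" and "t \<ge> 0"
  shows "measure (PiM I (\<lambda>_. mu)) {x \<in> space (PiM I (\<lambda>_. mu)).
           t \<le> \<bar>(\<Sum>j\<in>I. h (x j)) / card I - (\<integral>z. h z \<partial>mu)\<bar>} \<le> 2 * exp (-2 * real (card I) * t\<^sup>2)"
proof -
  obtain j0 where j0: "j0 \<in> I" using I by auto
  interpret P: prob_space "PiM I (\<lambda>_. mu)" by (rule prob_space_PiM) (use mu in auto)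
  have component: "(\<lambda>x. x j) \<in> measurable (PiM I (\<lambda>_. mu)) mu" if "j \<in> I" for j
    using that by (intro measurable_component_singleton) auto
  have distr_h: "distr (PiM I (\<lambda>_. mu)) borel (\<lambda>x. h (x j)) = distr mu borel h" if "j \<in> I" for j
    using distr_distr[OF h component[OF that]] distr_PiM_component[of I "\<lambda>_. mu" j] mu that
    by (simp add: comp_def)
  have indep: "P.indep_vars (\<lambda>_. borel) (\<lambda>j x. h (x j)) I"
    by (rule P.indep_vars_compose2[OF indep_vars_PiM_components]) (use mu I h in auto)
  have expectation: "(\<integral>z. h z \<partial>mu) = P.expectation (\<lambda>x. h (x j0))"
    using integral_distr[OF component[OF j0], of h] h distr_PiM_component[of I "\<lambda>_. mu" j0] mu j0
    by simp
  interpret Hoeffding_ineq_iid "PiM I (\<lambda>_. mu)" I "\<lambda>j x. h (x j)" "\<lambda>x. h (x j0)" 0 1 "\<integral>z. h z \<partial>mu"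
  proof unfold_locales
    show "(\<integral>z. h z \<partial>mu) \<equiv> P.expectation (\<lambda>x. h (x j0))" using expectation by simp
  qed (use I indep distr_h h component[OF j0] h_range j0 in auto)
  show ?thesis
    using Hoeffding_ineq_abs_ge'[of t] \<open>t \<ge> 0\<close> I by simp
qed

definition leave_one_out_deviation ::
    "'a measure \<Rightarrow> 'i set \<Rightarrow> ('a \<Rightarrow> 'a \<Rightarrow> real) \<Rightarrow> 'i \<Rightarrow> real \<Rightarrow> ('i \<Rightarrow> 'a) set" where
  "leave_one_out_deviation mu I g i t = {X \<in> space (PiM I (\<lambda>_. mu)).
     t \<le> \<bar>(\<Sum>j\<in>I - {i}. g (X i) (X j)) / card (I - {i}) - (\<integral>y. g (X i) y \<partial>mu)\<bar>}"

lemma leave_one_out_deviation_sets: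
  assumes "prob_space mu" and [measurable]: "(\<lambda>(x, y). g x y) \<in> borel_measurable (mu \<Otimes>\<^sub>M mu)"
    and [measurable]: "i \<in> I"
  shows "leave_one_out_deviation mu I g i t \<in> sets (PiM I (\<lambda>_. mu))"
proof -
  interpret prob_space mu by fact
  show ?thesis unfolding leave_one_out_deviation_def by measurable
qed

lemma measure_leave_one_out_deviation_le:
  fixes g :: "'a \<Rightarrow> 'a \<Rightarrow> real" and t :: real
  assumes mu: "prob_space mu" and g: "(\<lambda>(x, y). g x y) \<in> borel_measurable (mu \<Otimes>\<^sub>M mu)"
    and g_range: "\<And>x y. 0 \<le> g x y \<and> g x y \<le> 1"
    and I: "finite I" "i \<in> I" "I - {i} \<noteq> {}" and "t \<ge> 0"
  shows "measure (PiM I (\<lambda>_. mu)) (leave_one_out_deviation mu I g i t)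
           \<le> 2 * exp (-2 * real (card (I - {i})) * t\<^sup>2)"
proof (rule measure_PiM_le_sections[OF mu I(1,2) leave_one_out_deviation_sets[OF mu g I(2)]])
  fix y assume y: "y \<in> space mu"
  have "{x \<in> space (PiM (I - {i}) (\<lambda>_. mu)). x(i := y) \<in> leave_one_out_deviation mu I g i t}
      = {x \<in> space (PiM (I - {i}) (\<lambda>_. mu)).
           t \<le> \<bar>(\<Sum>j\<in>I - {i}. g y (x j)) / card (I - {i}) - (\<integral>z. g y z \<partial>mu)\<bar>}"
    using y I(2)
    by (auto simp: leave_one_out_deviation_def space_PiM PiE_iff extensional_def intro!: sum.cong)
  also have "measure (PiM (I - {i}) (\<lambda>_. mu)) \<dots> \<le> 2 * exp (-2 * real (card (I - {i})) * t\<^sup>2)"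
    using measurable_Pair2[OF g y] g_range I \<open>t \<ge> 0\<close> by (intro Hoeffding_PiM_iid[OF mu]) auto
  finally show "measure (PiM (I - {i}) (\<lambda>_. mu))
      {x \<in> space (PiM (I - {i}) (\<lambda>_. mu)). x(i := y) \<in> leave_one_out_deviation mu I g i t}
      \<le> 2 * exp (-2 * real (card (I - {i})) * t\<^sup>2)" .
qed

lemma integral_emp_measure:
  fixes g :: "'a \<Rightarrow> real"
  assumes "n > 0"
  shows "(\<integral>y. g y \<partial>emp_measure n X) = (\<Sum>j<n. g (X j)) / n"
  using assms by (simp add: emp_measure_def, subst integral_pmf_of_set) auto

definition kernel_ratio ::
    "'a measure \<Rightarrow> ('a \<Rightarrow> 'a \<Rightarrow> real) \<Rightarrow> ('a \<Rightarrow> 'a \<Rightarrow> real) \<Rightarrow> real \<Rightarrow> 'a \<Rightarrow> real" where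
  "kernel_ratio nu f g rho x = (\<integral>y. f x y \<partial>nu) / (rho + (\<integral>y. g x y \<partial>nu))"

lemma kernel_ratio_emp_measure:
  assumes "n > 0"
  shows "kernel_ratio (emp_measure n X) f g rho x
           = ((\<Sum>j<n. f x (X j)) / n) / (rho + (\<Sum>j<n. g x (X j)) / n)"
  using assms by (simp add: kernel_ratio_def integral_emp_measure)

lemma T_op_eq_kernel_ratio:
  assumes "finite_measure nu" and [measurable]: "Ms \<in> sets nu" "(\<lambda>y. k x y) \<in> borel_measurable nu"
    "v \<in> borel_measurable nu"
    and k_range: "\<And>y. 0 \<le> k x y \<and> k x y \<le> 1" and v_range: "\<And>y. y \<notin> Ms \<Longrightarrow> 0 \<le> v y \<and> v y \<le> 1"
  shows "T_op nu k Ms rho v x = kernel_ratio nu (\<lambda>x y. k x y * (if y \<in> Ms then 1 else v y)) k rho x"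
proof -
  interpret finite_measure nu by fact
  have Ms_part: "integrable nu (\<lambda>y. indicator Ms y *\<^sub>R k x y)"
    by (rule integrable_const_bound[where B = 1]) (use k_range in \<open>auto simp: indicator_def\<close>)
  have rest_part: "integrable nu (\<lambda>y. indicator (space nu - Ms) y *\<^sub>R (k x y * v y))"
    by (rule integrable_const_bound[where B = 1])
       (use k_range v_range in \<open>auto simp: indicator_def abs_mult intro: mult_le_one\<close>)
  have "(LINT y:Ms|nu. k x y) + (LINT y:(space nu - Ms)|nu. k x y * v y)
      = (\<integral>y. k x y * (if y \<in> Ms then 1 else v y) \<partial>nu)"
    unfolding set_lebesgue_integral_def
    by (subst Bochner_Integration.integral_add[OF Ms_part rest_part, symmetric])
       (auto intro!: Bochner_Integration.integral_cong simp: indicator_def)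
  then show ?thesis
    unfolding T_op_def kernel_ratio_def by simp
qed

lemma sample_norm_gt_iff:
  assumes "\<epsilon> \<ge> 0"
  shows "\<epsilon> < sample_norm n X Ms u \<longleftrightarrow> (\<exists>i<n. X i \<notin> Ms \<and> \<epsilon> < \<bar>u (X i)\<bar>)"
proof -
  have "{\<bar>u (X i)\<bar> | i. i < n \<and> X i \<notin> Ms} = (\<lambda>i. \<bar>u (X i)\<bar>) ` {i. i < n \<and> X i \<notin> Ms}"
    by auto
  then have "finite {\<bar>u (X i)\<bar> | i. i < n \<and> X i \<notin> Ms}" by simp
  then show ?thesis
    unfolding sample_norm_def using assms by (subst Max_gr_iff) auto
qed

lemma full_average_deviation_less:
  fixes c a s t :: real and n :: nat
  assumes "2 \<le> n" "0 \<le> c" "c \<le> 1" "0 \<le> a" "a \<le> 1" and dev: "\<bar>s / (real n - 1) - a\<bar> < t"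
  shows "\<bar>(c + s) / n - a\<bar> < 1 / n + t"
proof -
  define d where "d = s / (real n - 1) - a"
  have n: "real n - 1 > 0" using assms by simp
  have "(c + s) / n - a = (c - a) / n + ((real n - 1) / n) * d"
    using n by (simp add: d_def field_simps)
  moreover have "\<bar>(c - a) / n\<bar> \<le> 1 / n"
    using assms n by (auto simp: abs_le_iff divide_right_mono)
  moreover have "\<bar>((real n - 1) / n) * d\<bar> \<le> \<bar>d\<bar>"
    unfolding abs_mult using n by (intro mult_left_le_one_le) auto
  ultimately show ?thesis
    using dev unfolding d_def by linarith
qed

lemma ratio_perturbation_le:
  fixes a a' b b' rho e1 e2 :: real
  assumes "rho > 0" "0 \<le> b" "0 \<le> a'" "a' \<le> b'" "\<bar>a - a'\<bar> \<le> e1" "\<bar>b - b'\<bar> \<le> e2"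
  shows "\<bar>a' / (rho + b') - a / (rho + b)\<bar> \<le> (e1 + e2) / rho"
proof -
  have pos: "rho + b > 0" "rho + b' > 0" using assms by auto
  have numerator: "\<bar>(a' - a) * (rho + b') + a' * (b - b')\<bar> \<le> (e1 + e2) * (rho + b')"
  proof -
    have "\<bar>(a' - a) * (rho + b')\<bar> \<le> e1 * (rho + b')"
      using pos assms by (simp add: abs_mult abs_minus_commute mult_right_mono)
    moreover have "\<bar>a' * (b - b')\<bar> \<le> (rho + b') * e2"
      using pos assms by (simp add: abs_mult mult_mono)
    ultimately show ?thesis
      using abs_triangle_ineq[of "(a' - a) * (rho + b')" "a' * (b - b')"] by (simp add: algebra_simps)
  qed
  have "a' / (rho + b') - a / (rho + b) = ((a' - a) * (rho + b') + a' * (b - b')) / ((rho + b') * (rho + b))"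
    using pos by (simp add: diff_frac_eq algebra_simps)
  then have "\<bar>a' / (rho + b') - a / (rho + b)\<bar>
      = \<bar>(a' - a) * (rho + b') + a' * (b - b')\<bar> / ((rho + b') * (rho + b))"
    using pos by simp
  also have "\<dots> \<le> (e1 + e2) * (rho + b') / ((rho + b') * (rho + b))"
    using numerator pos by (intro divide_right_mono) auto
  also have "\<dots> = (e1 + e2) / (rho + b)" using pos by simp
  also have "\<dots> \<le> (e1 + e2) / rho"
    using assms by (intro divide_left_mono) auto
  finally show ?thesis .
qed

lemma integrable_bounded_kernel_section:
  fixes g :: "'a \<Rightarrow> 'a \<Rightarrow> real"
  assumes "finite_measure mu" and g: "(\<lambda>(x, y). g x y) \<in> borel_measurable (mu \<Otimes>\<^sub>M mu)"
    and "x \<in> space mu" and "\<And>y. \<bar>g x y\<bar> \<le> B"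
  shows "integrable mu (g x)"
proof (rule finite_measure.integrable_const_bound[where B = B])
  show "g x \<in> borel_measurable mu"
    using measurable_Pair2[OF g \<open>x \<in> space mu\<close>] by simp
qed (use assms in auto)

lemma kernel_ratio_emp_measure_deviation_le:
  fixes f k :: "'a \<Rightarrow> 'a \<Rightarrow> real" and X :: "nat \<Rightarrow> 'a"
  assumes mu: "prob_space mu"
    and f_meas: "(\<lambda>(x, y). f x y) \<in> borel_measurable (mu \<Otimes>\<^sub>M mu)"
    and k_meas: "(\<lambda>(x, y). k x y) \<in> borel_measurable (mu \<Otimes>\<^sub>M mu)"
    and f_le_k: "\<And>x y. 0 \<le> f x y \<and> f x y \<le> k x y" and k_le_1: "\<And>x y. k x y \<le> 1"
    and "rho > 0" "2 \<le> n" "i < n" and X: "X \<in> space (PiM {..<n} (\<lambda>_. mu))"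
    and f_close: "X \<notin> leave_one_out_deviation mu {..<n} f i t"
    and k_close: "X \<notin> leave_one_out_deviation mu {..<n} k i t"
  shows "\<bar>kernel_ratio mu f k rho (X i) - kernel_ratio (emp_measure n X) f k rho (X i)\<bar>
           \<le> 2 * (1 / n + t) / rho"
proof -
  interpret prob_space mu by (rule mu)
  let ?x = "X i"
  have "?x \<in> space mu" using X \<open>i < n\<close> by (auto simp: space_PiM)
  have "\<bar>f ?x y\<bar> \<le> 1" "\<bar>k ?x y\<bar> \<le> 1" for y
    using f_le_k[of ?x y] k_le_1[of ?x y] by auto
  then have f_int: "integrable mu (f ?x)" and k_int: "integrable mu (k ?x)"
    using integrable_bounded_kernel_section[OF finite_measure_axioms _ \<open>?x \<in> space mu\<close>] f_meas k_meas
    by blast+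
  have f_int_nonneg: "0 \<le> (\<integral>y. f ?x y \<partial>mu)"
    using f_le_k by (intro integral_nonneg_AE) auto
  have f_int_le: "(\<integral>y. f ?x y \<partial>mu) \<le> (\<integral>y. k ?x y \<partial>mu)"
    using f_le_k f_int k_int by (intro integral_mono) auto
  have k_int_le: "(\<integral>y. k ?x y \<partial>mu) \<le> 1"
    using integral_mono[OF k_int integrable_const[of 1]] k_le_1 prob_space by auto
  have card: "real (card ({..<n} - {i})) = real n - 1"
    using \<open>i < n\<close> by (simp add: of_nat_diff)
  have "\<bar>(\<Sum>j<n. f ?x (X j)) / n - (\<integral>y. f ?x y \<partial>mu)\<bar> < 1 / n + t"
    using \<open>i < n\<close> X f_close f_le_k[of ?x ?x] k_le_1[of ?x ?x] f_int_nonneg f_int_le k_int_le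
    by (subst sum.remove[of _ i])
       (auto intro!: full_average_deviation_less[OF \<open>2 \<le> n\<close>] simp: leave_one_out_deviation_def card)
  moreover have "\<bar>(\<Sum>j<n. k ?x (X j)) / n - (\<integral>y. k ?x y \<partial>mu)\<bar> < 1 / n + t"
    using \<open>i < n\<close> X k_close f_le_k[of ?x ?x] k_le_1[of ?x ?x] f_int_nonneg f_int_le k_int_le
    by (subst sum.remove[of _ i])
       (auto intro!: full_average_deviation_less[OF \<open>2 \<le> n\<close>] simp: leave_one_out_deviation_def card)
  moreover have "0 \<le> (\<Sum>j<n. k ?x (X j)) / n"
    using f_le_k by (intro divide_nonneg_nonneg sum_nonneg) (auto intro: order_trans)
  moreover have "kernel_ratio (emp_measure n X) f k rho ?x
      = ((\<Sum>j<n. f ?x (X j)) / n) / (rho + (\<Sum>j<n. k ?x (X j)) / n)"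
    using \<open>2 \<le> n\<close> by (intro kernel_ratio_emp_measure) simp
  ultimately have "\<bar>kernel_ratio mu f k rho ?x - kernel_ratio (emp_measure n X) f k rho ?x\<bar>
      \<le> ((1 / n + t) + (1 / n + t)) / rho"
    using \<open>rho > 0\<close> f_int_nonneg f_int_le
    by (simp only: kernel_ratio_def[of mu]) (intro ratio_perturbation_le; simp)
  then show ?thesis by simp
qed

lemma measure_UN_leave_one_out_deviation_le:
  fixes g :: "'a \<Rightarrow> 'a \<Rightarrow> real" and t :: real
  assumes mu: "prob_space mu" and g: "(\<lambda>(x, y). g x y) \<in> borel_measurable (mu \<Otimes>\<^sub>M mu)"
    and g_range: "\<And>x y. 0 \<le> g x y \<and> g x y \<le> 1" and "2 \<le> n" "t \<ge> 0"
  shows "(\<Union>i<n. leave_one_out_deviation mu {..<n} g i t) \<in> sets (PiM {..<n} (\<lambda>_. mu))"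
    and "measure (PiM {..<n} (\<lambda>_. mu)) (\<Union>i<n. leave_one_out_deviation mu {..<n} g i t)
           \<le> 2 * real n * exp (-2 * (real n - 1) * t\<^sup>2)"
proof -
  interpret P: prob_space "PiM {..<n} (\<lambda>_. mu)" by (rule prob_space_PiM) (use mu in auto)
  have sets: "leave_one_out_deviation mu {..<n} g i t \<in> sets (PiM {..<n} (\<lambda>_. mu))" if "i < n" for i
    using that by (simp add: leave_one_out_deviation_sets[OF mu g])
  then show "(\<Union>i<n. leave_one_out_deviation mu {..<n} g i t) \<in> sets (PiM {..<n} (\<lambda>_. mu))"
    by (intro sets.finite_UN) auto
  have "measure (PiM {..<n} (\<lambda>_. mu)) (\<Union>i<n. leave_one_out_deviation mu {..<n} g i t)
      \<le> (\<Sum>i<n. measure (PiM {..<n} (\<lambda>_. mu)) (leave_one_out_deviation mu {..<n} g i t))"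
    using sets by (intro P.finite_measure_subadditive_finite) auto
  also have "\<dots> \<le> (\<Sum>i<n. 2 * exp (-2 * (real n - 1) * t\<^sup>2))"
  proof (intro sum_mono)
    fix i assume "i \<in> {..<n}"
    moreover have "(if i = 0 then 1 else 0) \<in> {..<n} - {i}" using \<open>2 \<le> n\<close> by auto
    ultimately show "measure (PiM {..<n} (\<lambda>_. mu)) (leave_one_out_deviation mu {..<n} g i t)
        \<le> 2 * exp (-2 * (real n - 1) * t\<^sup>2)"
      using measure_leave_one_out_deviation_le[OF mu g g_range finite_lessThan, where i = i and t = t] \<open>t \<ge> 0\<close>
      by (auto simp: of_nat_diff)
  qed
  finally show "measure (PiM {..<n} (\<lambda>_. mu)) (\<Union>i<n. leave_one_out_deviation mu {..<n} g i t)
      \<le> 2 * real n * exp (-2 * (real n - 1) * t\<^sup>2)"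
    by simp
qed

theorem kernel_ratio_emp_measure_concentration:
  fixes mu :: "'a measure" and f k :: "'a \<Rightarrow> 'a \<Rightarrow> real" and D :: "'a set"
    and n :: nat and rho s t :: real
  assumes mu: "prob_space mu"
    and f_meas [measurable]: "(\<lambda>(x, y). f x y) \<in> borel_measurable (mu \<Otimes>\<^sub>M mu)"
    and k_meas [measurable]: "(\<lambda>(x, y). k x y) \<in> borel_measurable (mu \<Otimes>\<^sub>M mu)"
    and f_le_k: "\<And>x y. 0 \<le> f x y \<and> f x y \<le> k x y" and k_le_1: "\<And>x y. k x y \<le> 1"
    and "rho > 0" and [measurable]: "D \<in> sets mu"
  defines "E \<equiv> {X \<in> space (PiM {..<n} (\<lambda>_. mu)). \<exists>i<n. X i \<in> D \<and>
      s < \<bar>kernel_ratio mu f k rho (X i) - kernel_ratio (emp_measure n X) f k rho (X i)\<bar>}"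
  shows "E \<in> sets (PiM {..<n} (\<lambda>_. mu))"
    and "\<lbrakk>2 \<le> n; 0 \<le> t; 2 * (1 / n + t) / rho \<le> s\<rbrakk>
           \<Longrightarrow> measure (PiM {..<n} (\<lambda>_. mu)) E \<le> 4 * real n * exp (-2 * (real n - 1) * t\<^sup>2)"
proof -
  interpret mu: prob_space mu by (rule mu)
  interpret P: prob_space "PiM {..<n} (\<lambda>_. mu)" by (rule prob_space_PiM) (use mu in auto)
  have "E = (\<Union>i<n. {X \<in> space (PiM {..<n} (\<lambda>_. mu)). X i \<in> D \<and>
      s < \<bar>kernel_ratio mu f k rho (X i) - ((\<Sum>j<n. f (X i) (X j)) / n) / (rho + (\<Sum>j<n. k (X i) (X j)) / n)\<bar>})"
    unfolding E_def by (auto simp: kernel_ratio_emp_measure)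
  also have "\<dots> \<in> sets (PiM {..<n} (\<lambda>_. mu))"
  proof (intro sets.finite_UN)
    fix i assume [measurable]: "i \<in> {..<n}"
    show "{X \<in> space (PiM {..<n} (\<lambda>_. mu)). X i \<in> D \<and>
      s < \<bar>kernel_ratio mu f k rho (X i) - ((\<Sum>j<n. f (X i) (X j)) / n) / (rho + (\<Sum>j<n. k (X i) (X j)) / n)\<bar>}
      \<in> sets (PiM {..<n} (\<lambda>_. mu))"
      unfolding kernel_ratio_def by measurable
  qed simp
  finally show "E \<in> sets (PiM {..<n} (\<lambda>_. mu))" .
  assume "2 \<le> n" "0 \<le> t" and s: "2 * (1 / n + t) / rho \<le> s"
  have f_range: "0 \<le> f x y \<and> f x y \<le> 1" and k_range: "0 \<le> k x y \<and> k x y \<le> 1" for x y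
    using f_le_k[of x y] k_le_1[of x y] by auto
  let ?U = "\<lambda>g. \<Union>i<n. leave_one_out_deviation mu {..<n} g i t"
  note U_f = measure_UN_leave_one_out_deviation_le[OF mu f_meas f_range \<open>2 \<le> n\<close> \<open>0 \<le> t\<close>]
  note U_k = measure_UN_leave_one_out_deviation_le[OF mu k_meas k_range \<open>2 \<le> n\<close> \<open>0 \<le> t\<close>]
  have "E \<subseteq> ?U f \<union> ?U k"
  proof
    fix X assume "X \<in> E"
    then obtain i where i: "i < n" and X: "X \<in> space (PiM {..<n} (\<lambda>_. mu))"
      and far: "s < \<bar>kernel_ratio mu f k rho (X i) - kernel_ratio (emp_measure n X) f k rho (X i)\<bar>"
      unfolding E_def by blast
    show "X \<in> ?U f \<union> ?U k"
    proof (rule ccontr)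
      assume "X \<notin> ?U f \<union> ?U k"
      with i have "X \<notin> leave_one_out_deviation mu {..<n} f i t" "X \<notin> leave_one_out_deviation mu {..<n} k i t"
        by auto
      from kernel_ratio_emp_measure_deviation_le[OF mu f_meas k_meas f_le_k k_le_1 \<open>rho > 0\<close> \<open>2 \<le> n\<close> i X this]
      show False using far s by linarith
    qed
  qed
  then have "measure (PiM {..<n} (\<lambda>_. mu)) E \<le> measure (PiM {..<n} (\<lambda>_. mu)) (?U f \<union> ?U k)"
    using U_f(1) U_k(1) by (intro P.finite_measure_mono) auto
  also have "\<dots> \<le> measure (PiM {..<n} (\<lambda>_. mu)) (?U f) + measure (PiM {..<n} (\<lambda>_. mu)) (?U k)"
    using U_f(1) U_k(1) by (intro measure_subadditive) (auto simp: P.emeasure_eq_measure)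
  also have "\<dots> \<le> 4 * real n * exp (-2 * (real n - 1) * t\<^sup>2)"
    using U_f(2) U_k(2) by simp
  finally show "measure (PiM {..<n} (\<lambda>_. mu)) E \<le> 4 * real n * exp (-2 * (real n - 1) * t\<^sup>2)" .
qed

corollary kernel_ratio_emp_measure_tail:
  fixes mu :: "'a measure" and f k :: "'a \<Rightarrow> 'a \<Rightarrow> real" and D :: "'a set"
    and n :: nat and rho \<epsilon> :: real
  assumes mu: "prob_space mu"
    and f_meas: "(\<lambda>(x, y). f x y) \<in> borel_measurable (mu \<Otimes>\<^sub>M mu)"
    and k_meas: "(\<lambda>(x, y). k x y) \<in> borel_measurable (mu \<Otimes>\<^sub>M mu)"
    and f_le_k: "\<And>x y. 0 \<le> f x y \<and> f x y \<le> k x y" and k_le_1: "\<And>x y. k x y \<le> 1"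
    and rho_pos: "rho > 0" and D: "D \<in> sets mu"
    and eps_pos: "\<epsilon> > 0" and n_large: "real n > 6 / (\<epsilon> * rho)"
  defines "E \<equiv> {X \<in> space (PiM {..<n} (\<lambda>_. mu)). \<exists>i<n. X i \<in> D \<and>
      \<epsilon> < \<bar>kernel_ratio mu f k rho (X i) - kernel_ratio (emp_measure n X) f k rho (X i)\<bar>}"
  shows "E \<in> sets (PiM {..<n} (\<lambda>_. mu))"
    and "measure (PiM {..<n} (\<lambda>_. mu)) E < 4 * real n * exp (- ((real n - 1) * rho\<^sup>2 * \<epsilon>\<^sup>2 / 36))"
proof -
  note concentration = kernel_ratio_emp_measure_concentration[OF mu f_meas k_meas f_le_k k_le_1 rho_pos D,
      where s = \<epsilon> and n = n, folded E_def]
  show "E \<in> sets (PiM {..<n} (\<lambda>_. mu))" by (rule concentration(1))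
  have "n > 0"
    using n_large mult_pos_pos[OF eps_pos rho_pos] by (cases n) auto
  show "measure (PiM {..<n} (\<lambda>_. mu)) E < 4 * real n * exp (- ((real n - 1) * rho\<^sup>2 * \<epsilon>\<^sup>2 / 36))"
  proof (cases "n = 1")
    case True
    interpret P: prob_space "PiM {..<n} (\<lambda>_. mu)" by (rule prob_space_PiM) (use mu in auto)
    show ?thesis using P.prob_le_1[of E] True by simp
  next
    case False
    define t where "t = \<epsilon> * rho / 3"
    have "1 / real n < \<epsilon> * rho / 6"
      using n_large eps_pos rho_pos \<open>n > 0\<close> by (simp add: field_simps)
    then have "2 * (1 / n + t) / rho \<le> \<epsilon>"
      using rho_pos by (simp add: t_def field_simps)
    then have "measure (PiM {..<n} (\<lambda>_. mu)) E \<le> 4 * real n * exp (-2 * (real n - 1) * t\<^sup>2)"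
      using False \<open>n > 0\<close> eps_pos rho_pos by (intro concentration(2)) (auto simp: t_def)
    also have "\<dots> < 4 * real n * exp (- ((real n - 1) * rho\<^sup>2 * \<epsilon>\<^sup>2 / 36))"
      using False \<open>n > 0\<close> eps_pos rho_pos by (simp add: t_def power_mult_distrib field_simps)
    finally show ?thesis .
  qed
qed

theorem lemma4:
  fixes mu :: "'a::metric_space measure"
    and k :: "'a \<Rightarrow> 'a \<Rightarrow> real"
    and Ms :: "'a set"
    and rho :: real
    and vs :: "'a \<Rightarrow> real"
    and \<epsilon> :: real
    and n :: nat
  assumes compact_M: "compact (UNIV :: 'a set)"
    and sets_mu: "sets mu = sets borel"
    and prob: "prob_space mu"
    and k_meas: "(\<lambda>(x, y). k x y) \<in> borel_measurable (mu \<Otimes>\<^sub>M mu)"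
    and k_range: "\<And>x y. 0 \<le> k x y \<and> k x y \<le> 1"
    and Ms_meas: "Ms \<in> sets mu"
    and rho_pos: "rho > 0"
    and vs_meas: "vs \<in> borel_measurable mu"
    and vs_range: "\<And>x. x \<notin> Ms \<Longrightarrow> 0 \<le> vs x \<and> vs x \<le> 1"
    and vs_fix: "\<And>x. x \<notin> Ms \<Longrightarrow> T_op mu k Ms rho vs x = vs x"
    and vs_unique: "\<And>w. w \<in> borel_measurable mu \<Longrightarrow>
                       (\<forall>x. x \<notin> Ms \<longrightarrow> 0 \<le> w x \<and> w x \<le> 1) \<Longrightarrow>
                       (\<forall>x. x \<notin> Ms \<longrightarrow> T_op mu k Ms rho w x = w x) \<Longrightarrow>
                       (\<forall>x. x \<notin> Ms \<longrightarrow> w x = vs x)"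
    and eps_pos: "\<epsilon> > 0"
    and n_large: "real n > 6 / (\<epsilon> * rho)"
  shows "{X \<in> space (PiM {..<n} (\<lambda>_. mu)).
            sample_norm n X Ms (\<lambda>x. vs x - T_op (emp_measure n X) k Ms rho vs x) > \<epsilon>}
           \<in> sets (PiM {..<n} (\<lambda>_. mu))
       \<and> measure (PiM {..<n} (\<lambda>_. mu))
           {X \<in> space (PiM {..<n} (\<lambda>_. mu)).
            sample_norm n X Ms (\<lambda>x. vs x - T_op (emp_measure n X) k Ms rho vs x) > \<epsilon>}
         < 4 * real n * exp (- ((real n - 1) * rho^2 * \<epsilon>^2 / 36))"
proof -
  interpret mu: prob_space mu by (rule prob)
  have space_mu: "space mu = UNIV" using sets_eq_imp_space_eq[OF sets_mu] by simp
  define f where "f x y = k x y * (if y \<in> Ms then 1 else vs y)" for x y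
  note [measurable] = k_meas Ms_meas vs_meas
  have f_meas: "(\<lambda>(x, y). f x y) \<in> borel_measurable (mu \<Otimes>\<^sub>M mu)"
    unfolding f_def by measurable
  have f_le_k: "0 \<le> f x y \<and> f x y \<le> k x y" for x y
    using k_range[of x y] vs_range[of y] by (auto simp: f_def mult_left_le)
  have "- Ms \<in> sets mu"
    using sets.compl_sets[OF Ms_meas] by (simp add: space_mu Compl_eq_Diff_UNIV)
  have deviation_eq: "vs x - T_op (emp_measure n X) k Ms rho vs x
      = kernel_ratio mu f k rho x - kernel_ratio (emp_measure n X) f k rho x" if "x \<notin> Ms" for x X
  proof -
    have "(\<lambda>y. k x y) \<in> borel_measurable mu"
      using measurable_Pair2[OF k_meas, of x] by (simp add: space_mu)
    then have "T_op mu k Ms rho vs x = kernel_ratio mu f k rho x"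
      unfolding f_def
      by (rule T_op_eq_kernel_ratio[where k = k and x = x,
            OF mu.finite_measure_axioms Ms_meas _ vs_meas k_range vs_range])
    moreover have "T_op (emp_measure n X) k Ms rho vs x = kernel_ratio (emp_measure n X) f k rho x"
      unfolding f_def emp_measure_def
      by (rule T_op_eq_kernel_ratio[where k = k and x = x,
            OF measure_pmf.finite_measure_axioms _ _ _ k_range vs_range]) simp_all
    ultimately show ?thesis using vs_fix[OF that] by simp
  qed
  have k_le_1: "k x y \<le> 1" for x y using k_range by blast
  have event_eq: "{X \<in> space (PiM {..<n} (\<lambda>_. mu)).
          sample_norm n X Ms (\<lambda>x. vs x - T_op (emp_measure n X) k Ms rho vs x) > \<epsilon>}
      = {X \<in> space (PiM {..<n} (\<lambda>_. mu)). \<exists>i<n. X i \<in> - Ms \<and>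
          \<epsilon> < \<bar>kernel_ratio mu f k rho (X i) - kernel_ratio (emp_measure n X) f k rho (X i)\<bar>}"
    unfolding sample_norm_gt_iff[OF less_imp_le[OF eps_pos]] Compl_iff
    by (simp add: deviation_eq cong: conj_cong)
  show ?thesis
    unfolding event_eq
    using kernel_ratio_emp_measure_tail[OF prob f_meas k_meas f_le_k k_le_1 rho_pos \<open>- Ms \<in> sets mu\<close>
        eps_pos n_large]
    by (rule conjI)
qed

end
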